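(* The residue hyperfield $Fv$ of a Krasner valued hyperfield $(F,v)$ is a field, i.e. its hyperaddition takes only singleton values.
   Context: A hyperfield is $(F,+,\cdot,0,1)$ with $+$ a multivalued operation making $(F,+,0)$ a canonical hypergroup (associative, commutative, unique inverses $-x$ with $0\in x+(-x)$, and $z\in x+y\Rightarrow y\in z+(-x)$; write $x-y:=x+(-y)$, $A+B:=\bigcup_{a\in A,b\in B}a+b$), $(F,\cdot)$ commutative with $0$ absorbing, $x(y+z)=xy+xz$, and $F\setminus\{0\}$ an abelian group with neutral $1\neq0$. Valuation on $F$: for an ordered abelian group $\Gamma$ and $\infty>\Gamma$ with $\gamma+\infty=\infty+\gamma=\infty$, a surjective map $v:F\to\Gamma\cup\{\infty\}$ with $vx=\infty\iff x=0$, $v(xy)=vx+vy$, $z\in x+y\Rightarrow vz\ge\min\{vx,vy\}$; $vF:=v(F\setminus\{0\})$; $\mathcal{O}_v:=\{x:vx\ge0\}$, $\mathcal{M}_v:=\{x:vx>0\}$. Residue hyperfield: $Fv:=\{x+\mathcal{M}_v: x\in\mathcal{O}_v\}$ where $x+\mathcal{M}_v:=\bigcup_{m\in\mathcal{M}_v}(x+m)$, with hyperaddition $(x+\mathcal{M}_v)\oplus(y+\mathcal{M}_v):=\{z+\mathcal{M}_v:z\in x+y\}$ and multiplication $(x+\mathcal{M}_v)(y+\mathcal{M}_v):=xy+\mathcal{M}_v$; it is a hyperfield. An initial segment of $\Gamma$ is $\rho\subseteq\Gamma$ with $\delta\in\rho,\gamma<\delta\Rightarrow\gamma\in\rho$;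 $\rho+\gamma:=\{\delta+\gamma:\delta\in\rho\}$; "$\alpha>\rho+\gamma$" means $\alpha\notin\rho+\gamma$. Krasner valued hyperfield: a valued hyperfield $(F,v)$ such that (KVH1) for all $x,y\in F$ with $0\notin x+y$, $v(x+y)$ is a singleton; (KVH2) there is an initial segment $\rho_v$ of $vF$ with $0\in\rho_v$ (the norm) such that for all $x,y,z,t\in F$ with $z\in x+y$: $t\in x+y$ iff $vs>\rho_v+\min\{vx,vy\}$ for all $s\in z-t$. *)

theory Defs
  imports Main
begin

definition hneg :: "('a \<Rightarrow> 'a \<Rightarrow> 'a set) \<Rightarrow> 'a \<Rightarrow> 'a \<Rightarrow> 'a" where
  "hneg add z0 x = (THE y. z0 \<in> add x y)"

definition canonical_hypergroup :: "('a \<Rightarrow> 'a \<Rightarrow> 'a set) \<Rightarrow> 'a \<Rightarrow> bool" where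
  "canonical_hypergroup add z0 \<longleftrightarrow>
     (\<forall>x y. add x y \<noteq> {}) \<and>
     (\<forall>x y w. (\<Union>u\<in>add x y. add u w) = (\<Union>u\<in>add y w. add x u)) \<and>
     (\<forall>x y. add x y = add y x) \<and>
     (\<forall>x. add z0 x = {x}) \<and>
     (\<forall>x. \<exists>!y. z0 \<in> add x y) \<and>
     (\<forall>x y z. z \<in> add x y \<longrightarrow> y \<in> add z (hneg add z0 x))"

definition hyperfield ::
  "('a \<Rightarrow> 'a \<Rightarrow> 'a set) \<Rightarrow> ('a \<Rightarrow> 'a \<Rightarrow> 'a) \<Rightarrow> 'a \<Rightarrow> 'a \<Rightarrow> bool" where
  "hyperfield add mul z0 z1 \<longleftrightarrow>
     canonical_hypergroup add z0 \<and>
     (\<forall>x y. mul x y = mul y x) \<and>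
     (\<forall>x y w. mul (mul x y) w = mul x (mul y w)) \<and>
     (\<forall>x. mul z0 x = z0) \<and>
     (\<forall>x y w. mul x ` add y w = add (mul x y) (mul x w)) \<and>
     z1 \<noteq> z0 \<and>
     (\<forall>x. mul z1 x = x) \<and>
     (\<forall>x y. x \<noteq> z0 \<longrightarrow> y \<noteq> z0 \<longrightarrow> mul x y \<noteq> z0) \<and>
     (\<forall>x. x \<noteq> z0 \<longrightarrow> (\<exists>y. y \<noteq> z0 \<and> mul x y = z1))"

section \<open>Gamma \<union> {\<infinity>} modelled as 'g option, None = \<infinity>\<close>

definition ole :: "'g::linordered_ab_group_add option \<Rightarrow> 'g option \<Rightarrow> bool" where
  "ole a b = (case b of None \<Rightarrow> True
                | Some b' \<Rightarrow> (case a of None \<Rightarrow> False | Some a' \<Rightarrow> a' \<le> b'))"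

definition omin :: "'g::linordered_ab_group_add option \<Rightarrow> 'g option \<Rightarrow> 'g option" where
  "omin a b = (if ole a b then a else b)"

definition oplus :: "'g::linordered_ab_group_add option \<Rightarrow> 'g option \<Rightarrow> 'g option" where
  "oplus a b = (case a of None \<Rightarrow> None
                 | Some a' \<Rightarrow> (case b of None \<Rightarrow> None | Some b' \<Rightarrow> Some (a' + b')))"

definition hvaluation ::
  "('a \<Rightarrow> 'a \<Rightarrow> 'a set) \<Rightarrow> ('a \<Rightarrow> 'a \<Rightarrow> 'a) \<Rightarrow> 'a \<Rightarrow> ('a \<Rightarrow> 'g::linordered_ab_group_add option) \<Rightarrow> bool" where
  "hvaluation add mul z0 v \<longleftrightarrow>
     surj v \<and>
     (\<forall>x. v x = None \<longleftrightarrow> x = z0) \<and>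
     (\<forall>x y. v (mul x y) = oplus (v x) (v y)) \<and>
     (\<forall>x y z. z \<in> add x y \<longrightarrow> ole (omin (v x) (v y)) (v z))"

definition val_ring :: "('a \<Rightarrow> 'g::linordered_ab_group_add option) \<Rightarrow> 'a set" where
  "val_ring v = {x. ole (Some 0) (v x)}"

definition val_ideal :: "('a \<Rightarrow> 'g::linordered_ab_group_add option) \<Rightarrow> 'a set" where
  "val_ideal v = {x. \<forall>g. v x = Some g \<longrightarrow> 0 < g}"

definition res_class ::
  "('a \<Rightarrow> 'a \<Rightarrow> 'a set) \<Rightarrow> ('a \<Rightarrow> 'g::linordered_ab_group_add option) \<Rightarrow> 'a \<Rightarrow> 'a set" where
  "res_class add v x = (\<Union>m\<in>val_ideal v. add x m)"

definition residue_carrier ::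
  "('a \<Rightarrow> 'a \<Rightarrow> 'a set) \<Rightarrow> ('a \<Rightarrow> 'g::linordered_ab_group_add option) \<Rightarrow> 'a set set" where
  "residue_carrier add v = res_class add v ` val_ring v"

text \<open>Hyperaddition on Fv: (x+M) (+) (y+M) = {z+M : z \<in> x+y}, taken over all
  representatives x, y in O_v of the given classes.\<close>
definition residue_hadd ::
  "('a \<Rightarrow> 'a \<Rightarrow> 'a set) \<Rightarrow> ('a \<Rightarrow> 'g::linordered_ab_group_add option) \<Rightarrow> 'a set \<Rightarrow> 'a set \<Rightarrow> 'a set set" where
  "residue_hadd add v A B =
     {res_class add v z | z. \<exists>x y. x \<in> val_ring v \<and> y \<in> val_ring v \<and>
        A = res_class add v x \<and> B = res_class add v y \<and> z \<in> add x y}"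

definition initial_segment :: "'g::linordered_ab_group_add set \<Rightarrow> bool" where
  "initial_segment \<rho> \<longleftrightarrow> (\<forall>\<delta>\<in>\<rho>. \<forall>\<gamma>. \<gamma> < \<delta> \<longrightarrow> \<gamma> \<in> \<rho>)"

text \<open>"alpha > rho + gamma" means alpha \<notin> rho + gamma (as a subset of Gamma \<union> {\<infinity>}).\<close>
definition krasner_valued_hyperfield ::
  "('a \<Rightarrow> 'a \<Rightarrow> 'a set) \<Rightarrow> ('a \<Rightarrow> 'a \<Rightarrow> 'a) \<Rightarrow> 'a \<Rightarrow> 'a \<Rightarrow> ('a \<Rightarrow> 'g::linordered_ab_group_add option) \<Rightarrow> bool" where
  "krasner_valued_hyperfield add mul z0 z1 v \<longleftrightarrow>
     hyperfield add mul z0 z1 \<and> hvaluation add mul z0 v \<and>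
     (\<forall>x y. z0 \<notin> add x y \<longrightarrow> (\<exists>a. v ` add x y = {a})) \<and>
     (\<exists>\<rho>. initial_segment \<rho> \<and> 0 \<in> \<rho> \<and>
        (\<forall>x y z t \<gamma>. z \<in> add x y \<longrightarrow> omin (v x) (v y) = Some \<gamma> \<longrightarrow>
           (t \<in> add x y \<longleftrightarrow>
             (\<forall>s\<in>add z (hneg add z0 t). v s \<notin> Some ` ((\<lambda>\<delta>. \<delta> + \<gamma>) ` \<rho>)))))"

end

theory Submission
  imports Defs
begin

text \<open>Residue classes x + M are the classes of an equivalence relation, because M is closed
  under hyperaddition and negation; hence for x, y \<in> O the sum of the classes of x and y
  is the set of classes of the elements of x + y, whatever representatives are chosen.
  For z, z' \<in> x + y, the Krasner axiom (KVH2) with t = z' says that every s \<in> z - z'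
  has value above the norm shifted by min(vx, vy) \<ge> 0, so s \<in> M and z, z' have the
  same class.\<close>

lemma omin_eq_None_iff: "omin a b = None \<longleftrightarrow> a = None \<and> b = None"
  by (cases a; cases b) (auto simp: omin_def ole_def)

lemma omin_nonneg:
  "omin a b = Some g \<Longrightarrow> ole (Some 0) a \<Longrightarrow> ole (Some 0) b \<Longrightarrow> 0 \<le> g"
  by (cases a; cases b) (auto simp: omin_def ole_def split: if_splits)

lemma not_in_shifted_segment_imp_pos:
  fixes \<rho> :: "'g::linordered_ab_group_add set"
  assumes "initial_segment \<rho>" and "0 \<in> \<rho>" and "0 \<le> \<gamma>"
    and "a \<notin> (\<lambda>\<delta>. \<delta> + \<gamma>) ` \<rho>"
  shows "0 < a"
proof (rule ccontr)
  assume "\<not> 0 < a"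
  then have "a - \<gamma> \<le> 0" using \<open>0 \<le> \<gamma>\<close> by simp
  then have "a - \<gamma> \<in> \<rho>"
    using assms(1,2) unfolding initial_segment_def by (cases "a - \<gamma> = 0") auto
  then have "a \<in> (\<lambda>\<delta>. \<delta> + \<gamma>) ` \<rho>" by (rule rev_image_eqI) simp
  with assms(4) show False by contradiction
qed

locale valued_hyperfield =
  fixes add :: "'a \<Rightarrow> 'a \<Rightarrow> 'a set" and mul :: "'a \<Rightarrow> 'a \<Rightarrow> 'a"
    and z0 z1 :: 'a and v :: "'a \<Rightarrow> 'g::linordered_ab_group_add option"
  assumes hyperfield: "hyperfield add mul z0 z1"
    and valuation: "hvaluation add mul z0 v"
begin

abbreviation neg :: "'a \<Rightarrow> 'a" where "neg \<equiv> hneg add z0"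
abbreviation M :: "'a set" where "M \<equiv> val_ideal v"
abbreviation rc :: "'a \<Rightarrow> 'a set" where "rc \<equiv> res_class add v"

lemma hadd_nonempty: "add x y \<noteq> {}"
  and hadd_assoc: "(\<Union>u\<in>add x y. add u w) = (\<Union>u\<in>add y w. add x u)"
  and hadd_commute: "add x y = add y x"
  and hadd_zero_left: "add z0 x = {x}"
  and ex1_zero_in_hadd: "\<exists>!y. z0 \<in> add x y"
  and hadd_reversible: "z \<in> add x y \<Longrightarrow> y \<in> add z (neg x)"
  using hyperfield unfolding hyperfield_def canonical_hypergroup_def by (elim conjE; metis)+

lemma hadd_assoc_memD:
  assumes "u \<in> add x y" and "z \<in> add u w"
  obtains b where "b \<in> add y w" and "z \<in> add x b"
proof -
  have "z \<in> (\<Union>u\<in>add x y. add u w)" using assms by blast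
  then show thesis unfolding hadd_assoc using that by blast
qed

lemma hadd_assoc_memD':
  assumes "b \<in> add y w" and "z \<in> add x b"
  obtains u where "u \<in> add x y" and "z \<in> add u w"
proof -
  have "z \<in> (\<Union>b\<in>add y w. add x b)" using assms by blast
  then show thesis unfolding hadd_assoc[symmetric] using that by blast
qed

lemma hmul_commute: "mul x y = mul y x"
  and hmul_zero_left: "mul z0 x = z0"
  and hmul_hadd_distrib: "mul x ` add y w = add (mul x y) (mul x w)"
  and one_neq_zero: "z1 \<noteq> z0"
  and hmul_one_left: "mul z1 x = x"
  using hyperfield unfolding hyperfield_def by (elim conjE; metis)+

lemma val_eq_None_iff: "v x = None \<longleftrightarrow> x = z0"
  and val_hmul: "v (mul x y) = oplus (v x) (v y)"
  and val_hadd_ge_min: "z \<in> add x y \<Longrightarrow> ole (omin (v x) (v y)) (v z)"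
  using valuation unfolding hvaluation_def by (elim conjE; metis)+

lemma zero_in_hadd_hneg: "z0 \<in> add x (neg x)"
  unfolding hneg_def by (rule theI') (rule ex1_zero_in_hadd)

lemma hneg_unique: "z0 \<in> add x y \<Longrightarrow> y = neg x"
  using ex1_zero_in_hadd zero_in_hadd_hneg by blast

lemma hneg_hneg: "neg (neg x) = x"
  using hneg_unique zero_in_hadd_hneg hadd_commute by metis

lemma hadd_zero_right: "add x z0 = {x}"
  using hadd_commute hadd_zero_left by metis

lemma hmul_hneg_one: "mul x (neg z1) = neg x"
proof -
  have "mul x z0 \<in> mul x ` add z1 (neg z1)" using zero_in_hadd_hneg by blast
  then have "z0 \<in> add x (mul x (neg z1))"
    using hmul_hadd_distrib hmul_commute hmul_zero_left hmul_one_left by metis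
  then show ?thesis by (rule hneg_unique)
qed

lemma val_one: "v z1 = Some 0"
proof -
  obtain a where a: "v z1 = Some a" using val_eq_None_iff one_neq_zero by blast
  have "Some (a + a) = Some a" using val_hmul[of z1 z1] hmul_one_left a by (simp add: oplus_def)
  with a show ?thesis by simp
qed

text \<open>v(-1) = 0 because (-1)(-1) = 1 and the value group is torsion free.\<close>
lemma val_hneg_one: "v (neg z1) = Some 0"
proof -
  have "neg z1 \<noteq> z0"
    using zero_in_hadd_hneg[of z1] hadd_zero_right one_neq_zero by fastforce
  then obtain b where b: "v (neg z1) = Some b" using val_eq_None_iff by blast
  have "mul (neg z1) (neg z1) = z1" using hmul_hneg_one hneg_hneg by simp
  then have "b + b = 0" using val_hmul[of "neg z1" "neg z1"] val_one b by (simp add: oplus_def)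
  then have "b = 0" by (metis add_neg_neg add_pos_pos less_irrefl neq_iff)
  with b show ?thesis by simp
qed

lemma val_hneg: "v (neg x) = v x"
  using val_hmul[of x "neg z1"] val_hneg_one
  by (simp add: hmul_hneg_one oplus_def split: option.splits)

lemma val_ideal_hadd_closed: "m \<in> M \<Longrightarrow> n \<in> M \<Longrightarrow> k \<in> add m n \<Longrightarrow> k \<in> M"
  using val_hadd_ge_min[of k m n] unfolding val_ideal_def ole_def omin_def
  by (auto split: option.splits if_splits)

lemma hneg_in_val_ideal: "m \<in> M \<Longrightarrow> neg m \<in> M"
  unfolding val_ideal_def using val_hneg by simp

lemma zero_in_val_ideal: "z0 \<in> M"
  unfolding val_ideal_def using val_eq_None_iff[of z0] by simp

lemma res_class_refl: "x \<in> rc x"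
  unfolding res_class_def using zero_in_val_ideal hadd_zero_right by blast

lemma res_class_trans: "w \<in> rc u \<Longrightarrow> t \<in> rc w \<Longrightarrow> t \<in> rc u"
proof -
  assume "w \<in> rc u" "t \<in> rc w"
  then obtain m m' where m: "m \<in> M" "w \<in> add u m" and m': "m' \<in> M" "t \<in> add w m'"
    unfolding res_class_def by blast
  obtain b where "b \<in> add m m'" "t \<in> add u b" using m(2) m'(2) by (rule hadd_assoc_memD)
  then show "t \<in> rc u"
    using val_ideal_hadd_closed m m' unfolding res_class_def by blast
qed

lemma res_class_sym: "w \<in> rc u \<Longrightarrow> u \<in> rc w"
proof -
  assume "w \<in> rc u"
  then obtain m where m: "m \<in> M" "w \<in> add u m" unfolding res_class_def by blast
  then have "w \<in> add m u" by (simp add: hadd_commute)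
  then have "u \<in> add w (neg m)" by (simp add: hadd_reversible)
  then show ?thesis using hneg_in_val_ideal m unfolding res_class_def by blast
qed

lemma res_class_eq: "w \<in> rc u \<Longrightarrow> rc w = rc u"
  using res_class_trans res_class_sym by blast

lemma res_class_eq_iff: "rc x = rc y \<longleftrightarrow> x \<in> rc y"
  using res_class_eq res_class_refl by metis

lemma hadd_res_class_subset:
  assumes "x \<in> rc x0" and "y \<in> rc y0" and "z \<in> add x y"
  shows "\<exists>u\<in>add x0 y0. z \<in> rc u"
proof -
  obtain m n where m: "m \<in> M" "x \<in> add x0 m" and n: "n \<in> M" "y \<in> add y0 n"
    using assms(1,2) unfolding res_class_def by blast
  obtain b where b: "b \<in> add m y" "z \<in> add x0 b"
    using m(2) assms(3) by (rule hadd_assoc_memD)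
  obtain d where d: "d \<in> add n m" "b \<in> add y0 d"
    using n(2) b(1)[unfolded hadd_commute[of m]] by (rule hadd_assoc_memD)
  obtain u where u: "u \<in> add x0 y0" "z \<in> add u d"
    using d(2) b(2) by (rule hadd_assoc_memD')
  have "d \<in> M" using val_ideal_hadd_closed n(1) m(1) d(1) .
  with u show ?thesis unfolding res_class_def by blast
qed

lemma residue_hadd_res_class:
  assumes "x \<in> val_ring v" and "y \<in> val_ring v"
  shows "residue_hadd add v (rc x) (rc y) = rc ` add x y"
proof
  show "rc ` add x y \<subseteq> residue_hadd add v (rc x) (rc y)"
    using assms unfolding residue_hadd_def by blast
  show "residue_hadd add v (rc x) (rc y) \<subseteq> rc ` add x y"
  proof
    fix Z assume "Z \<in> residue_hadd add v (rc x) (rc y)"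
    then obtain z x' y' where "Z = rc z" "rc x = rc x'" "rc y = rc y'" "z \<in> add x' y'"
      unfolding residue_hadd_def by blast
    then obtain u where "u \<in> add x y" "z \<in> rc u"
      using hadd_res_class_subset res_class_eq_iff by metis
    then show "Z \<in> rc ` add x y" using \<open>Z = rc z\<close> res_class_eq by blast
  qed
qed

end

locale krasner_hyperfield = valued_hyperfield add mul z0 z1 v
  for add :: "'a \<Rightarrow> 'a \<Rightarrow> 'a set" and mul z0 z1
    and v :: "'a \<Rightarrow> 'g::linordered_ab_group_add option" +
  fixes \<rho> :: "'g set"
  assumes norm_initial_segment: "initial_segment \<rho>"
    and zero_in_norm: "0 \<in> \<rho>"
    and krasner_norm: "\<And>x y z t \<gamma>. z \<in> add x y \<Longrightarrow> omin (v x) (v y) = Some \<gamma> \<Longrightarrow>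
           (t \<in> add x y \<longleftrightarrow>
             (\<forall>s\<in>add z (hneg add z0 t). v s \<notin> Some ` ((\<lambda>\<delta>. \<delta> + \<gamma>) ` \<rho>)))"
begin

lemma hadd_same_res_class:
  assumes x: "x \<in> val_ring v" and y: "y \<in> val_ring v"
    and z: "z \<in> add x y" and z': "z' \<in> add x y"
  shows "rc z = rc z'"
proof (cases "omin (v x) (v y)")
  case None
  then have "x = z0" "y = z0" using omin_eq_None_iff val_eq_None_iff by blast+
  with z z' show ?thesis by (simp add: hadd_zero_left)
next
  case (Some \<gamma>)
  have "0 \<le> \<gamma>" using omin_nonneg[OF Some] x y unfolding val_ring_def by simp
  obtain s where s: "s \<in> add z (neg z')" using hadd_nonempty by blast
  have "v s \<notin> Some ` ((\<lambda>\<delta>. \<delta> + \<gamma>) ` \<rho>)" using krasner_norm[OF z Some, of z'] z' s by blast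
  then have "s \<in> M"
    using not_in_shifted_segment_imp_pos[OF norm_initial_segment zero_in_norm \<open>0 \<le> \<gamma>\<close>]
    unfolding val_ideal_def by blast
  moreover have "z \<in> add z' s"
    using hadd_reversible[of s "neg z'" z] s hadd_commute hneg_hneg by metis
  ultimately have "z \<in> rc z'" unfolding res_class_def by blast
  then show ?thesis by (rule res_class_eq)
qed

end

lemma krasner_valued_hyperfieldE:
  assumes "krasner_valued_hyperfield add mul z0 z1 v"
  obtains \<rho> where "krasner_hyperfield add mul z0 z1 v \<rho>"
  using assms unfolding krasner_valued_hyperfield_def krasner_hyperfield_def
    krasner_hyperfield_axioms_def valued_hyperfield_def
  by (elim conjE exE) (simp only: simp_thms)

theorem proposition4p16:
  fixes add :: "'a \<Rightarrow> 'a \<Rightarrow> 'a set" and mul :: "'a \<Rightarrow> 'a \<Rightarrow> 'a"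
    and z0 z1 :: 'a and v :: "'a \<Rightarrow> 'g::linordered_ab_group_add option"
  assumes "krasner_valued_hyperfield add mul z0 z1 v"
  shows "\<forall>A\<in>residue_carrier add v. \<forall>B\<in>residue_carrier add v.
           \<exists>C. residue_hadd add v A B = {C}"
proof -
  obtain \<rho> where "krasner_hyperfield add mul z0 z1 v \<rho>"
    using assms by (rule krasner_valued_hyperfieldE)
  then interpret krasner_hyperfield add mul z0 z1 v \<rho> .
  have "\<exists>C. residue_hadd add v (rc x) (rc y) = {C}"
    if x: "x \<in> val_ring v" and y: "y \<in> val_ring v" for x y
  proof -
    obtain c where c: "c \<in> add x y" using hadd_nonempty by blast
    have "rc ` add x y = {rc c}" using hadd_same_res_class[OF x y _ c] c by blast
    then have "residue_hadd add v (rc x) (rc y) = {rc c}"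
      using residue_hadd_res_class[OF x y] by simp
    then show ?thesis ..
  qed
  then show ?thesis by (simp add: residue_carrier_def)
qed

end
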